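(* Let $D\ge 3$, let $n,p\ge 0$ with $n+p\ge 2$, and let $N_1,\dots,N_n,M_1,\dots,M_p\ge0$ be integers. For $P_a\in\mathcal{H}^{(D)}_{N_a}$ and $Q_b\in\mathcal{H}^{(D)}_{M_b}$ define $$I_{n,p}(P_1,\dots,P_n,\bar Q_1,\dots,\bar Q_p)=\int_{S^{D-1}}d\Omega(x)\,P_1(x)\cdots P_n(x)\,\bar Q_1(x)\cdots\bar Q_p(x),$$ where $d\Omega$ is the rotation-invariant probability measure on the unit sphere $S^{D-1}\subset\mathbb{R}^D$. Write the arguments as $F_1,\dots,F_{n+p}$ (so $F_a=P_a$ for $a\le n$ and $F_{n+b}=\bar Q_b$). Then $I_{n,p}$ is a simple intertwiner: for any two distinct positions $a\neq b$ in $\{1,\dots,n+p\}$ and all $i,j,k,l\in\{1,\dots,D\}$, $$\sum_{\text{antisym. over }(i,j,k,l)} I_{n,p}\big(F_1,\dots,X_{ij}\cdot F_a,\dots,X_{kl}\cdot F_b,\dots,F_{n+p}\big)=0,$$ i.e. $I_{n,p}(\dots,X_{[ij}\cdot F_a,\dots,X_{kl]}\cdot F_b,\dots)=0$, where $X_{ij}$ is applied in position $a$, $X_{kl}$ in position $b$, and all other arguments are unchanged.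
   Context: $\mathcal{H}^{(D)}_N$ is the space of complex-valued harmonic homogeneous polynomials of degree $N$ on $\mathbb{R}^D$, a representation of $\mathrm{SO}(D)$ via $(g\cdot P)(x)=P(g^{-1}x)$. The Lie algebra generators $X_{ij}$ of $\mathfrak{so}(D)$ act on functions on $\mathbb{R}^D$ (including the complex conjugates $\bar Q$) by the differential operators $X_{ij}\cdot f=x_i\,\partial f/\partial x_j-x_j\,\partial f/\partial x_i$. $[ijkl]$ denotes total antisymmetrization over the four indices. (The $P_a$ correspond to incoming and the $Q_b$ to outgoing edges at a vertex of an $\mathrm{SO}(D)$ spin network; the displayed condition is the quantum intersection constraint.) *)

theory Defs
  imports "HOL-Analysis.Analysis" "HOL-Combinatorics.Permutations"
begin

definition partial :: "'d::finite \<Rightarrow> (real^'d \<Rightarrow> complex) \<Rightarrow> real^'d \<Rightarrow> complex" where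
  "partial i f x = vector_derivative (\<lambda>t::real. f (x + t *\<^sub>R axis i 1)) (at 0)"

definition laplacian :: "(real^'d::finite \<Rightarrow> complex) \<Rightarrow> real^'d \<Rightarrow> complex" where
  "laplacian f x = (\<Sum>i\<in>UNIV. partial i (partial i f) x)"

definition hom_poly :: "nat \<Rightarrow> (real^'d::finite \<Rightarrow> complex) \<Rightarrow> bool" where
  "hom_poly N f \<longleftrightarrow> (\<exists>c :: ('d \<Rightarrow> nat) \<Rightarrow> complex.
      finite {\<alpha>. c \<alpha> \<noteq> 0} \<and> (\<forall>\<alpha>. c \<alpha> \<noteq> 0 \<longrightarrow> (\<Sum>i\<in>UNIV. \<alpha> i) = N) \<and>
      (\<forall>x. f x = (\<Sum>\<alpha>\<in>{\<alpha>. c \<alpha> \<noteq> 0}. c \<alpha> * (\<Prod>i\<in>UNIV. complex_of_real (x $ i) ^ \<alpha> i))))"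

definition harmonic_space :: "nat \<Rightarrow> (real^'d::finite \<Rightarrow> complex) set" where
  "harmonic_space N = {f. hom_poly N f \<and> (\<forall>x. laplacian f x = 0)}"

definition Xact :: "'d::finite \<Rightarrow> 'd \<Rightarrow> (real^'d \<Rightarrow> complex) \<Rightarrow> real^'d \<Rightarrow> complex" where
  "Xact i j f x = complex_of_real (x $ i) * partial j f x - complex_of_real (x $ j) * partial i f x"

definition rot_inv_sphere_prob :: "(real^'d::finite) measure \<Rightarrow> bool" where
  "rot_inv_sphere_prob \<mu> \<longleftrightarrow> sets \<mu> = sets borel \<and> emeasure \<mu> (space \<mu>) = 1 \<and>
     emeasure \<mu> (sphere 0 1) = 1 \<and>
     (\<forall>g. orthogonal_transformation g \<and> det (matrix g) = 1 \<longrightarrow> distr \<mu> borel g = \<mu>)"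

definition Iint :: "(real^'d::finite) measure \<Rightarrow> nat \<Rightarrow> (nat \<Rightarrow> real^'d \<Rightarrow> complex) \<Rightarrow> complex" where
  "Iint \<mu> m F = integral\<^sup>L \<mu> (\<lambda>x. \<Prod>a<m. F a x)"

end

theory Submission imports Defs "HOL-Probability.Probability_Measure" begin

text \<open>The antisymmetrised integrand already vanishes pointwise: expanding
  \<open>X\<^sub>i\<^sub>j F\<^sub>a \<cdot> X\<^sub>k\<^sub>l F\<^sub>b\<close>, every term carries two coordinate factors whose product is
  symmetric in two of the four antisymmetrised indices, so it cancels against its transposed
  partner. Harmonicity only serves to make the integrals meaningful (polynomials are bounded
  on the sphere, which carries all the mass).\<close>

inductive polyfun :: "(real^'d::finite \<Rightarrow> complex) \<Rightarrow> bool" where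
  polyfun_const: "polyfun (\<lambda>x. c)"
| polyfun_coord: "polyfun (\<lambda>x. complex_of_real (x $ i))"
| polyfun_add: "polyfun f \<Longrightarrow> polyfun g \<Longrightarrow> polyfun (\<lambda>x. f x + g x)"
| polyfun_mult: "polyfun f \<Longrightarrow> polyfun g \<Longrightarrow> polyfun (\<lambda>x. f x * g x)"

lemma polyfun_sum:
  "finite S \<Longrightarrow> (\<And>s. s \<in> S \<Longrightarrow> polyfun (f s)) \<Longrightarrow> polyfun (\<lambda>x. \<Sum>s\<in>S. f s x)"
  by (induction S rule: finite_induct) (auto intro: polyfun.intros)

lemma polyfun_prod:
  "finite S \<Longrightarrow> (\<And>s. s \<in> S \<Longrightarrow> polyfun (f s)) \<Longrightarrow> polyfun (\<lambda>x. \<Prod>s\<in>S. f s x)"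
  by (induction S rule: finite_induct) (auto intro: polyfun.intros)

lemma polyfun_power: "polyfun f \<Longrightarrow> polyfun (\<lambda>x. f x ^ n)"
  by (induction n) (auto intro: polyfun.intros)

lemma polyfun_diff:
  assumes "polyfun f" "polyfun g"
  shows "polyfun (\<lambda>x. f x - g x)"
proof -
  have "polyfun (\<lambda>x. f x + (-1) * g x)"
    using assms by (intro polyfun.intros)
  then show ?thesis by simp
qed

lemma polyfun_cnj: "polyfun f \<Longrightarrow> polyfun (\<lambda>x. cnj (f x))"
  by (induction rule: polyfun.induct) (auto intro: polyfun.intros)

lemma hom_poly_imp_polyfun:
  fixes f :: "real^'d::finite \<Rightarrow> complex"
  assumes "hom_poly N f"
  shows "polyfun f"
proof -
  obtain c :: "('d \<Rightarrow> nat) \<Rightarrow> complex" where "finite {\<alpha>. c \<alpha> \<noteq> 0}"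
    and "f = (\<lambda>x. \<Sum>\<alpha>\<in>{\<alpha>. c \<alpha> \<noteq> 0}. c \<alpha> * (\<Prod>i\<in>UNIV. complex_of_real (x $ i) ^ \<alpha> i))"
    using assms unfolding hom_poly_def by fast
  then show ?thesis
    by (auto intro!: polyfun_sum polyfun_prod polyfun_power polyfun.intros)
qed

lemma harmonic_space_imp_polyfun: "f \<in> harmonic_space N \<Longrightarrow> polyfun f"
  by (auto simp: harmonic_space_def intro: hom_poly_imp_polyfun)

lemma continuous_on_polyfun: "polyfun f \<Longrightarrow> continuous_on UNIV f"
  by (induction rule: polyfun.induct) (auto intro!: continuous_intros)

lemma polyfun_has_partial_derivative:
  "polyfun f \<Longrightarrow> \<exists>g. polyfun g \<and>
     (\<forall>x. ((\<lambda>t::real. f (x + t *\<^sub>R axis i 1)) has_vector_derivative g x) (at 0))"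
proof (induction rule: polyfun.induct)
  case (polyfun_const c)
  show ?case
    by (intro exI[of _ "\<lambda>x. 0"]) (auto intro: polyfun.intros derivative_eq_intros)
next
  case (polyfun_coord j)
  have "((\<lambda>t::real. complex_of_real (x $ j) + complex_of_real t * complex_of_real (axis i 1 $ j))
          has_vector_derivative complex_of_real (axis i 1 $ j)) (at 0)" for x :: "real^'a"
    unfolding has_vector_derivative_def
    by (auto intro!: derivative_eq_intros simp: scaleR_conv_of_real)
  then show ?case
    by (intro exI[of _ "\<lambda>x. complex_of_real (axis i 1 $ j)"]) (auto intro: polyfun_const)
next
  case (polyfun_add f g)
  then obtain f' g' where "polyfun f'" "polyfun g'"
    "\<forall>x. ((\<lambda>t::real. f (x + t *\<^sub>R axis i 1)) has_vector_derivative f' x) (at 0)"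
    "\<forall>x. ((\<lambda>t::real. g (x + t *\<^sub>R axis i 1)) has_vector_derivative g' x) (at 0)" by blast
  then show ?case
    by (intro exI[of _ "\<lambda>x. f' x + g' x"])
      (auto intro: polyfun.intros has_vector_derivative_add)
next
  case (polyfun_mult f g)
  then obtain f' g' where "polyfun f'" "polyfun g'"
    "\<forall>x. ((\<lambda>t::real. f (x + t *\<^sub>R axis i 1)) has_vector_derivative f' x) (at 0)"
    "\<forall>x. ((\<lambda>t::real. g (x + t *\<^sub>R axis i 1)) has_vector_derivative g' x) (at 0)" by blast
  with polyfun_mult.hyps show ?case
    by (intro exI[of _ "\<lambda>x. f x * g' x + f' x * g x"])
      (auto intro!: polyfun.intros has_vector_derivative_mult[THEN has_vector_derivative_eq_rhs])
qed

lemma polyfun_partial: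
  assumes "polyfun f"
  shows "polyfun (partial i f)"
proof -
  obtain g where "polyfun g"
    and g: "\<forall>x. ((\<lambda>t::real. f (x + t *\<^sub>R axis i 1)) has_vector_derivative g x) (at 0)"
    using polyfun_has_partial_derivative[OF assms] by blast
  moreover have "partial i f = g"
    using g by (auto simp: partial_def fun_eq_iff intro: vector_derivative_at)
  ultimately show ?thesis by simp
qed

lemma polyfun_Xact: "polyfun f \<Longrightarrow> polyfun (Xact i j f)"
  unfolding Xact_def by (intro polyfun_diff polyfun.intros polyfun_partial)

lemma integrable_continuous_concentrated_on_compact:
  fixes h :: "'a::topological_space \<Rightarrow> 'b::{banach, second_countable_topology}"
  assumes "finite_measure \<mu>" "sets \<mu> = sets borel"
    and "compact K" "AE x in \<mu>. x \<in> K" "continuous_on UNIV h"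
  shows "integrable \<mu> h"
proof -
  interpret finite_measure \<mu> by fact
  have "compact (h ` K)"
    using assms(3,5) by (auto intro: compact_continuous_image continuous_on_subset)
  then obtain B where B: "\<forall>y\<in>h ` K. norm y \<le> B"
    using compact_imp_bounded bounded_iff by metis
  have "h \<in> borel_measurable \<mu>"
    using borel_measurable_continuous_onI[OF assms(5)] measurable_cong_sets[OF assms(2) refl]
    by blast
  with assms(4) B show ?thesis
    by (intro integrable_const_bound[where B=B]) auto
qed

lemma rot_inv_sphere_prob_integrable_polyfun:
  assumes "rot_inv_sphere_prob \<mu>" "polyfun h"
  shows "integrable \<mu> h"
proof -
  have sets: "sets \<mu> = sets borel" and "emeasure \<mu> (space \<mu>) = 1"
    and sphere: "emeasure \<mu> (sphere 0 1) = 1"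
    using assms(1) unfolding rot_inv_sphere_prob_def by auto
  then interpret prob_space \<mu> by (intro prob_spaceI)
  have "AE x in \<mu>. x \<in> sphere 0 1"
    using sphere by (intro AE_prob_1) (simp add: emeasure_eq_measure)
  with sets show ?thesis
    by (intro integrable_continuous_concentrated_on_compact[of _ "sphere 0 1"]
        continuous_on_polyfun assms(2) compact_sphere finite_measure_axioms)
qed

lemma sum_sign_permutes_eq_0_if_transpose_invariant:
  fixes T :: "('a \<Rightarrow> 'a) \<Rightarrow> 'b::{idom, ring_char_0}"
  assumes "finite S" "u \<in> S" "w \<in> S" "u \<noteq> w"
    and inv: "\<And>\<pi>. \<pi> permutes S \<Longrightarrow> T (\<pi> \<circ> Transposition.transpose u w) = T \<pi>"
  shows "(\<Sum>\<pi> | \<pi> permutes S. of_int (sign \<pi>) * T \<pi>) = 0"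
proof -
  let ?t = "Transposition.transpose u w"
  have "(\<Sum>\<pi> | \<pi> permutes S. of_int (sign \<pi>) * T \<pi>) =
        (\<Sum>\<pi> | \<pi> permutes S. of_int (sign (\<pi> \<circ> ?t)) * T (\<pi> \<circ> ?t))"
    using assms(2,3) by (intro sum_permutations_compose_right permutes_swap_id)
  also have "\<dots> = (\<Sum>\<pi> | \<pi> permutes S. - (of_int (sign \<pi>) * T \<pi>))"
  proof (rule sum.cong[OF refl])
    fix \<pi> assume "\<pi> \<in> {\<pi>. \<pi> permutes S}"
    then have "\<pi> permutes S" by simp
    moreover from this have "permutation \<pi>"
      using assms(1) by (auto simp: permutation_permutes)
    then have "sign (\<pi> \<circ> ?t) = - sign \<pi>"
      using assms(4) by (simp add: sign_compose sign_swap_id permutation_swap_id)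
    ultimately show "of_int (sign (\<pi> \<circ> ?t)) * T (\<pi> \<circ> ?t) = - (of_int (sign \<pi>) * T \<pi>)"
      using inv by simp
  qed
  also have "\<dots> = - (\<Sum>\<pi> | \<pi> permutes S. of_int (sign \<pi>) * T \<pi>)"
    by (simp add: sum_negf)
  finally show ?thesis
    by simp
qed

text \<open>Here \<open>c\<close>, \<open>df\<close>, \<open>dg\<close> stand for the coordinates and the gradients of \<open>F\<^sub>a\<close> and
  \<open>F\<^sub>b\<close> at a point, read through the index map \<open>0,1,2,3 \<mapsto> i,j,k,l\<close>.\<close>

lemma antisymmetrized_rotation_product_eq_0:
  fixes c df dg :: "nat \<Rightarrow> 'a::{idom, ring_char_0}"
  shows "(\<Sum>\<pi> | \<pi> permutes {..<4::nat}. of_int (sign \<pi>) *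
     ((c (\<pi> 0) * df (\<pi> 1) - c (\<pi> 1) * df (\<pi> 0)) *
      (c (\<pi> 2) * dg (\<pi> 3) - c (\<pi> 3) * dg (\<pi> 2)))) = 0"
proof -
  define T where "T = (\<lambda>u w v y (\<pi>::nat \<Rightarrow> nat). c (\<pi> u) * df (\<pi> v) * c (\<pi> w) * dg (\<pi> y))"
  have vanish: "(\<Sum>\<pi> | \<pi> permutes {..<4::nat}. of_int (sign \<pi>) * T u w v y \<pi>) = 0"
    if "u < 4" "w < 4" "u \<noteq> w" "v \<noteq> u" "v \<noteq> w" "y \<noteq> u" "y \<noteq> w" for u w v y
    using that
    by (intro sum_sign_permutes_eq_0_if_transpose_invariant[of _ u w])
      (auto simp: T_def Transposition.transpose_def)
  have "(\<Sum>\<pi> | \<pi> permutes {..<4::nat}. of_int (sign \<pi>) *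
     ((c (\<pi> 0) * df (\<pi> 1) - c (\<pi> 1) * df (\<pi> 0)) *
      (c (\<pi> 2) * dg (\<pi> 3) - c (\<pi> 3) * dg (\<pi> 2)))) =
     (\<Sum>\<pi> | \<pi> permutes {..<4::nat}. of_int (sign \<pi>) * T 0 2 1 3 \<pi>) -
     (\<Sum>\<pi> | \<pi> permutes {..<4::nat}. of_int (sign \<pi>) * T 0 3 1 2 \<pi>) -
     (\<Sum>\<pi> | \<pi> permutes {..<4::nat}. of_int (sign \<pi>) * T 1 2 0 3 \<pi>) +
     (\<Sum>\<pi> | \<pi> permutes {..<4::nat}. of_int (sign \<pi>) * T 1 3 0 2 \<pi>)"
    by (simp add: sum_subtractf[symmetric] sum.distrib[symmetric] T_def algebra_simps)
  also have "\<dots> = 0"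
    by (simp add: vanish)
  finally show ?thesis .
qed

lemma prod_remove_two:
  assumes "finite S" "a \<in> S" "b \<in> S" "a \<noteq> b"
  shows "prod f S = f a * f b * prod f (S - {a} - {b})"
  using assms by (simp add: prod.remove[of S a] prod.remove[of "S - {a}" b] mult.assoc)

lemma antisymmetrized_Xact_product_eq_0:
  fixes F :: "nat \<Rightarrow> real^'d::finite \<Rightarrow> complex" and v :: "nat \<Rightarrow> 'd"
  assumes "a < m" "b < m" "a \<noteq> b"
  shows "(\<Sum>\<pi> | \<pi> permutes {..<4::nat}. of_int (sign \<pi>) *
           (\<Prod>c<m. (F(a := Xact (v (\<pi> 0)) (v (\<pi> 1)) (F a),
                      b := Xact (v (\<pi> 2)) (v (\<pi> 3)) (F b))) c x)) = 0"
proof -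
  define R where "R = (\<Prod>c\<in>{..<m} - {a} - {b}. F c x)"
  define coord where "coord = (\<lambda>u. complex_of_real (x $ v u))"
  define df where "df = (\<lambda>u. partial (v u) (F a) x)"
  define dg where "dg = (\<lambda>u. partial (v u) (F b) x)"
  have "(\<Prod>c<m. (F(a := Xact (v (\<pi> 0)) (v (\<pi> 1)) (F a),
                   b := Xact (v (\<pi> 2)) (v (\<pi> 3)) (F b))) c x) =
        R * ((coord (\<pi> 0) * df (\<pi> 1) - coord (\<pi> 1) * df (\<pi> 0)) *
             (coord (\<pi> 2) * dg (\<pi> 3) - coord (\<pi> 3) * dg (\<pi> 2)))" for \<pi> :: "nat \<Rightarrow> nat"
    using assms
    by (subst prod_remove_two[of _ a b]) (auto simp: R_def Xact_def coord_def df_def dg_def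
        intro!: prod.cong)
  then show ?thesis
    using antisymmetrized_rotation_product_eq_0[of coord df dg]
    by (simp add: sum_distrib_left[symmetric] mult.left_commute)
qed

theorem theorem3:
  fixes \<mu> :: "(real^'d::finite) measure"
    and n p :: nat
    and N M :: "nat \<Rightarrow> nat"
    and P Q :: "nat \<Rightarrow> real^'d \<Rightarrow> complex"
    and a b :: nat
    and i j k l :: 'd
  assumes "CARD('d) \<ge> 3"
    and "n + p \<ge> 2"
    and "rot_inv_sphere_prob \<mu>"
    and "\<forall>c<n. P c \<in> harmonic_space (N c)"
    and "\<forall>c<p. Q c \<in> harmonic_space (M c)"
    and "a < n + p" and "b < n + p" and "a \<noteq> b"
  shows "let F = (\<lambda>c. if c < n then P c else (\<lambda>x. cnj (Q (c - n) x)));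
             v = (\<lambda>m::nat. if m = 0 then i else if m = 1 then j else if m = 2 then k else l)
         in (\<Sum>\<pi> | \<pi> permutes {..<4::nat}.
               of_int (sign \<pi>) *
               Iint \<mu> (n + p) (F(a := Xact (v (\<pi> 0)) (v (\<pi> 1)) (F a),
                                 b := Xact (v (\<pi> 2)) (v (\<pi> 3)) (F b)))) = 0"
proof -
  define F where "F = (\<lambda>c. if c < n then P c else (\<lambda>x. cnj (Q (c - n) x)))"
  define v where "v = (\<lambda>m::nat. if m = 0 then i else if m = 1 then j else if m = 2 then k else l)"
  define G where "G = (\<lambda>\<pi>::nat \<Rightarrow> nat. F(a := Xact (v (\<pi> 0)) (v (\<pi> 1)) (F a),
                                          b := Xact (v (\<pi> 2)) (v (\<pi> 3)) (F b)))"
  have "polyfun (P c)" if "c < n" for c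
    using that assms(4) harmonic_space_imp_polyfun by blast
  moreover have "polyfun (Q c)" if "c < p" for c
    using that assms(5) harmonic_space_imp_polyfun by blast
  ultimately have "polyfun (F c)" if "c < n + p" for c
    using that by (simp add: F_def polyfun_cnj)
  then have "polyfun (G \<pi> c)" if "c < n + p" for \<pi> c
    using that assms(6,7) by (auto simp: G_def intro: polyfun_Xact)
  then have "integrable \<mu> (\<lambda>x. of_int (sign \<pi>) * (\<Prod>c<n + p. G \<pi> c x))" for \<pi>
    by (intro integrable_mult_right rot_inv_sphere_prob_integrable_polyfun[OF assms(3)]
        polyfun_prod) auto
  then have "(\<Sum>\<pi> | \<pi> permutes {..<4::nat}. of_int (sign \<pi>) * Iint \<mu> (n + p) (G \<pi>)) =
     integral\<^sup>L \<mu> (\<lambda>x. \<Sum>\<pi> | \<pi> permutes {..<4::nat}. of_int (sign \<pi>) * (\<Prod>c<n + p. G \<pi> c x))"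
    by (simp add: Iint_def Bochner_Integration.integral_sum)
  also have "\<dots> = 0"
    unfolding G_def antisymmetrized_Xact_product_eq_0[OF assms(6-8)] by simp
  finally show ?thesis
    by (simp add: Let_def F_def[symmetric] v_def[symmetric] G_def)
qed

end
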